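(* Let $G$ be a finite unweighted undirected graph with $n$ nodes. Let $H$ be the spanning subgraph of $G$ obtained as follows: start with all nodes of $G$ and no edges; for each node $x$ of $G$, add to $H$ exactly $\lfloor n^{1/3} \rfloor$ edges of $G$ incident to $x$ (chosen arbitrarily), or, if $\deg_G(x) < \lfloor n^{1/3} \rfloor$, add all edges of $G$ incident to $x$. Then apply $6$-spanner-completion to $H$. Regardless of the choices made (of initial edges, of violating pairs, and of shortest paths), the resulting graph $H$ has at most $O(n^{4/3})$ edges.
   Context: For a graph $F$ and nodes $u,v$, $d_F(u,v)$ denotes the length (number of edges) of a shortest path from $u$ to $v$ in $F$ ($\infty$ if none exists). A spanning subgraph $H$ of $G$ is an additive $k$-spanner of $G$ if $d_H(u,v) \le d_G(u,v)+k$ for every pair of nodes $u,v$. The procedure $k$-spanner-completion applied to a spanning subgraph $H$ of $G$ is: as long as there exists a pair of nodes $u,v$ with $d_H(u,v) > d_G(u,v)+k$, pick such a pair, find a shortest path from $u$ to $v$ in $G$, and add all edges of this path to $H$. When it terminates, $H$ is an additive $k$-spanner of $G$. The $O(\cdot)$ bound refers to an absolute constant independent of $G$ and $n$. *)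

theory Defs
  imports Complex_Main "HOL-Library.Extended_Nat"
begin

definition simple_graph :: "'a set \<Rightarrow> 'a set set \<Rightarrow> bool" where
  "simple_graph V E \<longleftrightarrow> finite V \<and>
     E \<subseteq> {e. \<exists>a b. a \<in> V \<and> b \<in> V \<and> a \<noteq> b \<and> e = {a, b}}"

definition walk :: "'a set set \<Rightarrow> 'a list \<Rightarrow> bool" where
  "walk E xs \<longleftrightarrow> xs \<noteq> [] \<and> (\<forall>i. Suc i < length xs \<longrightarrow> {xs ! i, xs ! Suc i} \<in> E)"

definition walk_edges :: "'a list \<Rightarrow> 'a set set" where
  "walk_edges xs = {{xs ! i, xs ! Suc i} | i. Suc i < length xs}"

text \<open>Distance d_F(u,v) in the graph with edge set E (infinity if no path).\<close>
definition dist :: "'a set set \<Rightarrow> 'a \<Rightarrow> 'a \<Rightarrow> enat" where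
  "dist E u v = Inf {enat (length xs - 1) | xs. walk E xs \<and> hd xs = u \<and> last xs = v}"

definition degree :: "'a set set \<Rightarrow> 'a \<Rightarrow> nat" where
  "degree E x = card {e \<in> E. x \<in> e}"

definition completion_step :: "'a set \<Rightarrow> 'a set set \<Rightarrow> nat \<Rightarrow> 'a set set \<Rightarrow> 'a set set \<Rightarrow> bool" where
  "completion_step V E k H H' \<longleftrightarrow>
     (\<exists>u v p. u \<in> V \<and> v \<in> V \<and> dist H u v > dist E u v + enat k \<and>
        walk E p \<and> hd p = u \<and> last p = v \<and> enat (length p - 1) = dist E u v \<and>
        H' = H \<union> walk_edges p)"

definition additive_spanner :: "'a set \<Rightarrow> 'a set set \<Rightarrow> nat \<Rightarrow> 'a set set \<Rightarrow> bool" where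
  "additive_spanner V E k H \<longleftrightarrow> (\<forall>u\<in>V. \<forall>v\<in>V. dist H u v \<le> dist E u v + enat k)"

end

theory Submission
  imports Defs
begin

text \<open>Let d = \<lfloor>n^(1/3)\<rfloor>. Call a node heavy if its degree is at least d; its cluster is the node
  together with the d neighbours joined to it by initial edges. Every edge at a light node is
  initially present, so a completion step along a shortest path p adds at most one new edge per
  heavy node of p. Since p is shortest, a node lies in the clusters of at most three nodes of p,
  so the clusters of the heavy nodes of p cover at least (d+1)/3 nodes per new edge. For each
  covered node y, the violation forces the distance in H from y to every node of the cluster of
  the first heavy node of p, or to every node of the cluster of the last one, to drop, measured by
  the potential \<Psi>(H) = \<Sigma>_(x,y) min(5, d_H(x,y) - d_G(x,y)). Hence (d+1)^2|H| + 3\<Psi>(H) never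
  increases, and as \<Psi> \<le> 5n^2 and initially |H| \<le> nd, finally |H| \<le> nd + 15n^2/(d+1)^2 \<le> 16n^(4/3).\<close>

section \<open>Walks and distances\<close>

lemma walk_singleton [simp]: "walk E [a]"
  by (simp add: walk_def)

lemma walk_Cons2: "walk E (x # y # ys) \<longleftrightarrow> {x, y} \<in> E \<and> walk E (y # ys)"
  unfolding walk_def by (auto simp: nth_Cons split: nat.splits)

lemma walk_append:
  "walk E xs \<Longrightarrow> walk E (y # ys) \<Longrightarrow> last xs = y \<Longrightarrow> walk E (xs @ ys)"
proof (induction xs)
  case (Cons x xs)
  then show ?case by (cases xs) (simp_all add: walk_Cons2)
qed (simp add: walk_def)

lemma walk_rev: "walk E xs \<Longrightarrow> walk E (rev xs)"
  unfolding walk_def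
proof (intro conjI allI impI)
  assume "xs \<noteq> [] \<and> (\<forall>i. Suc i < length xs \<longrightarrow> {xs ! i, xs ! Suc i} \<in> E)"
  then show "rev xs \<noteq> []" by simp
next
  fix i
  assume w: "xs \<noteq> [] \<and> (\<forall>i. Suc i < length xs \<longrightarrow> {xs ! i, xs ! Suc i} \<in> E)"
    and i: "Suc i < length (rev xs)"
  let ?j = "length xs - Suc (Suc i)"
  have "{xs ! ?j, xs ! Suc ?j} \<in> E" using w i by simp
  moreover have "Suc ?j = length xs - Suc i" using i by simp
  ultimately show "{rev xs ! i, rev xs ! Suc i} \<in> E"
    using i by (simp add: rev_nth insert_commute)
qed

lemma walk_edges_subset: "walk E p \<Longrightarrow> walk_edges p \<subseteq> E"
  unfolding walk_edges_def walk_def by auto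

definition reach :: "'a set set \<Rightarrow> 'a \<Rightarrow> 'a \<Rightarrow> nat \<Rightarrow> bool" where
  "reach E u v n \<longleftrightarrow> (\<exists>xs. walk E xs \<and> hd xs = u \<and> last xs = v \<and> length xs = Suc n)"

lemma reach_refl: "reach E u u 0"
  unfolding reach_def by (rule exI[of _ "[u]"]) simp

lemma reach_trans: "reach E u v m \<Longrightarrow> reach E v w k \<Longrightarrow> reach E u w (m + k)"
proof -
  assume "reach E u v m" "reach E v w k"
  then obtain xs ys where xs: "walk E xs" "hd xs = u" "last xs = v" "length xs = Suc m"
    and ys: "walk E ys" "hd ys = v" "last ys = w" "length ys = Suc k"
    unfolding reach_def by blast
  then obtain ys' where ys': "ys = v # ys'" by (cases ys) auto
  have "walk E (xs @ ys')" using walk_append xs ys ys' by metis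
  moreover have "hd (xs @ ys') = u" "last (xs @ ys') = w" "length (xs @ ys') = Suc (m + k)"
    using xs ys ys' by (cases xs; cases ys'; auto)+
  ultimately show ?thesis unfolding reach_def by blast
qed

lemma reach_sym: "reach E u v n \<Longrightarrow> reach E v u n"
proof -
  assume "reach E u v n"
  then obtain xs where "walk E xs" "hd xs = u" "last xs = v" "length xs = Suc n"
    unfolding reach_def by blast
  then show ?thesis unfolding reach_def
    by (intro exI[of _ "rev xs"]) (auto simp: walk_rev hd_rev last_rev)
qed

lemma reach_mono: "reach E u v n \<Longrightarrow> E \<subseteq> F \<Longrightarrow> reach F u v n"
  unfolding reach_def walk_def by blast

lemma reach_nth:
  assumes "\<And>k. i \<le> k \<Longrightarrow> k < j \<Longrightarrow> {p ! k, p ! Suc k} \<in> F" "i \<le> j"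
  shows "reach F (p ! i) (p ! j) (j - i)"
proof -
  let ?xs = "map (\<lambda>k. p ! (i + k)) [0..<Suc (j - i)]"
  have "walk F ?xs" "hd ?xs = p ! i" "last ?xs = p ! j"
    using assms unfolding walk_def by (auto simp del: upt_Suc simp: hd_map last_map)
  then show ?thesis unfolding reach_def by (intro exI[of _ ?xs]) simp
qed

lemma dist_eq_Inf_reach: "dist E u v = Inf {enat n | n. reach E u v n}"
proof -
  have "{enat (length xs - 1) | xs. walk E xs \<and> hd xs = u \<and> last xs = v}
      = {enat n | n. reach E u v n}"
  proof (intro equalityI subsetI)
    fix z assume "z \<in> {enat (length xs - 1) | xs. walk E xs \<and> hd xs = u \<and> last xs = v}"
    then obtain xs where "z = enat (length xs - 1)" "walk E xs" "hd xs = u" "last xs = v"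
      by blast
    moreover from \<open>walk E xs\<close> have "length xs = Suc (length xs - 1)"
      unfolding walk_def by simp
    ultimately show "z \<in> {enat n | n. reach E u v n}" unfolding reach_def by blast
  qed (force simp: reach_def)
  then show ?thesis unfolding dist_def by simp
qed

lemma dist_le_if_reach: "reach E u v n \<Longrightarrow> dist E u v \<le> enat n"
  unfolding dist_eq_Inf_reach by (rule Inf_lower) blast

lemma reach_if_dist_eq: "dist E u v = enat m \<Longrightarrow> reach E u v m"
proof -
  assume m: "dist E u v = enat m"
  let ?A = "{enat n | n. reach E u v n}"
  have "?A \<noteq> {}" using m unfolding dist_eq_Inf_reach by (auto simp: Inf_enat_def split: if_splits)
  then have "Inf ?A \<in> ?A" unfolding Inf_enat_def by (auto intro: LeastI)
  then show ?thesis using m unfolding dist_eq_Inf_reach by auto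
qed

lemma dist_triangle: "dist E u w \<le> dist E u v + dist E v w"
proof (cases "dist E u v"; cases "dist E v w")
  fix a b assume "dist E u v = enat a" "dist E v w = enat b"
  then have "reach E u w (a + b)" by (blast intro: reach_trans reach_if_dist_eq)
  then show ?thesis using \<open>dist E u v = enat a\<close> \<open>dist E v w = enat b\<close>
    by (simp add: dist_le_if_reach)
qed simp_all

lemma dist_triangle_le:
  "dist E u v \<le> enat m \<Longrightarrow> dist E v w \<le> enat n \<Longrightarrow> dist E u w \<le> enat (m + n)"
  using dist_triangle[of E u w v] add_mono[of "dist E u v" "enat m" "dist E v w" "enat n"]
  by simp

lemma dist_sym: "dist E u v = dist E v u"
  unfolding dist_eq_Inf_reach using reach_sym by metis

lemma dist_antimono: "E \<subseteq> F \<Longrightarrow> dist F u v \<le> dist E u v"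
  by (cases "dist E u v") (auto dest!: reach_if_dist_eq intro: dist_le_if_reach reach_mono)

lemma dist_self: "dist E u u = 0"
  using dist_le_if_reach[OF reach_refl, of E u] by (simp add: zero_enat_def[symmetric])

lemma dist_le_1_if_edge: "{u, v} \<in> E \<Longrightarrow> dist E u v \<le> 1"
  using dist_le_if_reach[OF reach_nth[of 0 1 "[u, v]" E]] by (simp add: one_enat_def)

lemma dist_nth_le:
  assumes "\<And>k. i \<le> k \<Longrightarrow> k < j \<Longrightarrow> {p ! k, p ! Suc k} \<in> F" "i \<le> j"
  shows "dist F (p ! i) (p ! j) \<le> enat (j - i)"
  using assms by (intro dist_le_if_reach reach_nth)

lemma shortest_walk_dist_nth:
  assumes p: "walk E p" "dist E (hd p) (last p) = enat (length p - 1)"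
    and ij: "i \<le> j" "j < length p"
  shows "enat (j - i) \<le> dist E (p ! i) (p ! j)"
proof (cases "dist E (p ! i) (p ! j)")
  case (enat x)
  have step: "{p ! k, p ! Suc k} \<in> E" if "Suc k < length p" for k
    using p(1) that unfolding walk_def by blast
  have "dist E (p ! 0) (p ! i) \<le> enat (i - 0)"
    using step ij by (intro dist_nth_le) auto
  moreover have "dist E (p ! j) (p ! (length p - 1)) \<le> enat (length p - 1 - j)"
    using step ij by (intro dist_nth_le) auto
  moreover have "hd p = p ! 0" "last p = p ! (length p - 1)"
    using p(1) by (simp_all add: walk_def hd_conv_nth last_conv_nth)
  ultimately have "dist E (hd p) (p ! i) \<le> enat i" "dist E (p ! j) (last p) \<le> enat (length p - 1 - j)"
    by simp_all
  then have "dist E (hd p) (last p) \<le> enat (i + x + (length p - 1 - j))"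
    using enat by (metis dist_triangle_le order_refl)
  then show ?thesis using p(2) enat ij by simp
qed simp

lemma card_le_3_if_diameter_le_2:
  assumes "finite I" "\<And>i j. i \<in> I \<Longrightarrow> j \<in> I \<Longrightarrow> i \<le> j \<Longrightarrow> j - i \<le> (2::nat)"
  shows "card I \<le> 3"
proof (cases "I = {}")
  case False
  have "I \<subseteq> {Min I..Min I + 2}"
  proof
    fix i assume "i \<in> I"
    then have "Min I \<le> i" "Min I \<in> I" using assms(1) False by auto
    then show "i \<in> {Min I..Min I + 2}" using assms(2)[of "Min I" i] \<open>i \<in> I\<close> by auto
  qed
  then show ?thesis using card_mono[of "{Min I..Min I + 2}" I] by simp
qed simp

lemma walk_nth_in_V:
  assumes "simple_graph V E" "walk E p" "hd p \<in> V" "i < length p"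
  shows "p ! i \<in> V"
  using assms(4)
proof (induction i)
  case 0
  then show ?case using assms(2,3) by (simp add: hd_conv_nth walk_def)
next
  case (Suc i)
  then have "{p ! i, p ! Suc i} \<in> E" using assms(2) unfolding walk_def by blast
  then show ?case using assms(1) unfolding simple_graph_def by (auto simp: doubleton_eq_iff)
qed

section \<open>Heavy nodes, clusters and the potential\<close>

locale spanner_construction =
  fixes V :: "'a set" and E :: "'a set set" and S :: "'a \<Rightarrow> 'a set set" and d :: nat
  assumes simple: "simple_graph V E"
    and S_edges: "\<And>x. x \<in> V \<Longrightarrow> S x \<subseteq> {e \<in> E. x \<in> e}"
    and card_S: "\<And>x. x \<in> V \<Longrightarrow> card (S x) = min (degree E x) d"
begin

definition H0 :: "'a set set" where
  "H0 = (\<Union>x\<in>V. S x)"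

definition heavy :: "'a \<Rightarrow> bool" where
  "heavy h \<longleftrightarrow> h \<in> V \<and> d \<le> degree E h"

definition cluster :: "'a \<Rightarrow> 'a set" where
  "cluster h = insert h {y. {h, y} \<in> S h}"

text \<open>psi F x y = min 5 (d_F(x,y) - d_G(x,y)) for d_G(x,y) < \<infinity>.\<close>
definition psi :: "'a set set \<Rightarrow> 'a \<Rightarrow> 'a \<Rightarrow> nat" where
  "psi F x y = card {j. j < (5::nat) \<and> dist E x y + enat j < dist F x y}"

definition Psi :: "'a set set \<Rightarrow> nat" where
  "Psi F = (\<Sum>(x, y)\<in>V \<times> V. psi F x y)"

lemma finite_V: "finite V"
  using simple unfolding simple_graph_def by blast

lemma edge_in_V: "{a, b} \<in> E \<Longrightarrow> a \<in> V \<and> b \<in> V \<and> a \<noteq> b"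
  using simple unfolding simple_graph_def by (auto simp: doubleton_eq_iff)

lemma finite_E: "finite E"
proof -
  have "E \<subseteq> Pow V" using simple unfolding simple_graph_def by blast
  then show ?thesis using finite_V finite_subset by blast
qed

lemma H0_subset_E: "H0 \<subseteq> E"
  unfolding H0_def using S_edges by blast

lemma card_H0_le: "card H0 \<le> card V * d"
proof -
  have "card H0 \<le> (\<Sum>x\<in>V. card (S x))" unfolding H0_def by (rule card_UN_le[OF finite_V])
  also have "\<dots> \<le> (\<Sum>x\<in>V. d)" by (rule sum_mono) (simp add: card_S)
  finally show ?thesis by simp
qed

lemma edge_at_light_in_H0:
  assumes "w \<in> V" "\<not> heavy w" "e \<in> E" "w \<in> e"
  shows "e \<in> H0"
proof -
  have "card (S w) = card {e \<in> E. w \<in> e}"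
    using card_S assms(1,2) unfolding heavy_def degree_def by simp
  then have "S w = {e \<in> E. w \<in> e}"
    using S_edges[OF assms(1)] finite_E by (simp add: card_subset_eq)
  then show ?thesis using assms unfolding H0_def by blast
qed

lemma cluster_edge: "h \<in> V \<Longrightarrow> y \<in> cluster h \<Longrightarrow> y = h \<or> {h, y} \<in> H0"
  unfolding cluster_def H0_def by blast

lemma cluster_in_V: "h \<in> V \<Longrightarrow> y \<in> cluster h \<Longrightarrow> y \<in> V"
  using cluster_edge H0_subset_E edge_in_V by blast

lemma dist_cluster_le_1:
  assumes "h \<in> V" "y \<in> cluster h" "H0 \<subseteq> F"
  shows "dist F h y \<le> enat 1" "dist F y h \<le> enat 1"
proof -
  show "dist F h y \<le> enat 1"
    using cluster_edge[OF assms(1,2)] assms(3) dist_self[of F h] dist_le_1_if_edge[of h y F]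
    by (auto simp: one_enat_def zero_enat_def)
  then show "dist F y h \<le> enat 1" by (simp add: dist_sym)
qed

lemma card_cluster:
  assumes "heavy h"
  shows "card (cluster h) = Suc d" "finite (cluster h)"
proof -
  have hV: "h \<in> V" using assms heavy_def by auto
  have Sh: "S h \<subseteq> {e \<in> E. h \<in> e}" "card (S h) = d"
    using S_edges[OF hV] card_S[OF hV] assms unfolding heavy_def by auto
  let ?N = "{y. {h, y} \<in> S h}"
  have "bij_betw (\<lambda>y. {h, y}) ?N (S h)"
  proof (rule bij_betwI')
    fix e assume "e \<in> S h"
    with Sh(1) obtain y where "e = {h, y}" using simple unfolding simple_graph_def by blast
    then show "\<exists>y\<in>?N. e = {h, y}" using \<open>e \<in> S h\<close> by auto
  qed (auto simp: doubleton_eq_iff)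
  moreover have "h \<notin> ?N" using Sh edge_in_V[of h h] by auto
  moreover have "finite ?N" using cluster_in_V[OF hV] finite_V unfolding cluster_def
    by (meson finite_subset insertCI subsetI)
  ultimately show "card (cluster h) = Suc d" "finite (cluster h)"
    unfolding cluster_def using Sh(2) by (simp_all add: bij_betw_same_card)
qed

lemma psi_set_antimono:
  "F \<subseteq> F' \<Longrightarrow> {j. j < (5::nat) \<and> dist E x y + enat j < dist F' x y}
     \<subseteq> {j. j < 5 \<and> dist E x y + enat j < dist F x y}"
  using dist_antimono[of F F' x y] less_le_trans by auto

lemma psi_antimono: "F \<subseteq> F' \<Longrightarrow> psi F' x y \<le> psi F x y"
  unfolding psi_def by (rule card_mono) (simp_all add: psi_set_antimono)

lemma psi_le_5: "psi F x y \<le> 5"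
proof -
  have "psi F x y \<le> card {..<5::nat}" unfolding psi_def by (rule card_mono) auto
  then show ?thesis by simp
qed

lemma psi_sym: "psi F x y = psi F y x"
  unfolding psi_def by (simp add: dist_sym)

lemma Psi_le: "Psi F \<le> 5 * (card V * card V)"
proof -
  have "Psi F \<le> (\<Sum>q\<in>V \<times> V. 5)" unfolding Psi_def by (rule sum_mono) (auto simp: psi_le_5)
  then show ?thesis by (simp add: card_cartesian_product)
qed

text \<open>The witness is j = D + 2 - d_G(x,y): it is counted for F but no longer for F'.\<close>
lemma psi_decreases:
  assumes "F \<subseteq> F'" "F' \<subseteq> E" "dist F' x y \<le> enat (D + 2)" "enat D \<le> dist E x y + 2"
    and "enat (D + 2) < dist F x y"
  shows "psi F' x y < psi F x y"
proof -
  have "dist E x y \<le> enat (D + 2)"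
    using dist_antimono[OF assms(2), of x y] assms(3) by simp
  then obtain g where g: "dist E x y = enat g" "g \<le> D + 2" "D \<le> g + 2"
    using assms(4) by (cases "dist E x y") (auto simp: numeral_eq_enat)
  let ?A = "{j. j < (5::nat) \<and> dist E x y + enat j < dist F x y}"
  let ?B = "{j. j < (5::nat) \<and> dist E x y + enat j < dist F' x y}"
  have "D + 2 - g \<in> ?A - ?B" using g assms(3,5) by (auto simp: not_less)
  moreover have "?B \<subseteq> ?A" using assms(1) by (rule psi_set_antimono)
  ultimately show ?thesis unfolding psi_def by (intro psubset_card_mono) auto
qed

end

section \<open>A single completion step\<close>

locale violating_path = spanner_construction +
  fixes H :: "'a set set" and p :: "'a list"
  assumes H0_subset_H: "H0 \<subseteq> H" and H_subset_E: "H \<subseteq> E"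
    and walk_p: "walk E p" and hd_p_in_V: "hd p \<in> V"
    and shortest: "dist E (hd p) (last p) = enat (length p - 1)"
    and violation: "dist E (hd p) (last p) + enat 6 < dist H (hd p) (last p)"
begin

definition H' :: "'a set set" where
  "H' = H \<union> walk_edges p"

definition L :: nat where
  "L = length p - 1"

definition heavy_pos :: "nat set" where
  "heavy_pos = {i. i \<le> L \<and> heavy (p ! i)}"

definition first_heavy :: nat where
  "first_heavy = Min heavy_pos"

definition last_heavy :: nat where
  "last_heavy = Max heavy_pos"

definition covered :: "'a set" where
  "covered = (\<Union>i\<in>heavy_pos. cluster (p ! i))"

definition dropped :: "('a \<times> 'a) set" where
  "dropped = {(x, y) \<in> V \<times> V. psi H' x y < psi H x y}"

lemma length_p: "length p = Suc L"
  using walk_p unfolding L_def walk_def by simp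

lemma hd_p: "hd p = p ! 0" and last_p: "last p = p ! L"
  using walk_p unfolding L_def walk_def by (simp_all add: hd_conv_nth last_conv_nth)

lemma path_in_V: "i \<le> L \<Longrightarrow> p ! i \<in> V"
  using walk_nth_in_V[OF simple walk_p hd_p_in_V] length_p by simp

lemma path_edge: "k < L \<Longrightarrow> {p ! k, p ! Suc k} \<in> E"
  using walk_p length_p unfolding walk_def by simp

lemma H_subset_H': "H \<subseteq> H'" and H'_subset_E: "H' \<subseteq> E"
  using H_subset_E walk_edges_subset[OF walk_p] unfolding H'_def by auto

lemma H0_subset_H': "H0 \<subseteq> H'"
  using H0_subset_H H_subset_H' by blast

lemma dist_path_ge: "i \<le> j \<Longrightarrow> j \<le> L \<Longrightarrow> enat (j - i) \<le> dist E (p ! i) (p ! j)"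
  using shortest_walk_dist_nth[OF walk_p shortest] length_p by simp

lemma dist_path_H'_le: "i \<le> j \<Longrightarrow> j \<le> L \<Longrightarrow> dist H' (p ! i) (p ! j) \<le> enat (j - i)"
  by (rule dist_nth_le) (auto simp: H'_def walk_edges_def length_p)

lemma path_edge_in_H:
  assumes "k < L" "k \<notin> heavy_pos \<or> Suc k \<notin> heavy_pos"
  shows "{p ! k, p ! Suc k} \<in> H"
proof -
  have "\<not> heavy (p ! k) \<or> \<not> heavy (p ! Suc k)" using assms unfolding heavy_pos_def by auto
  moreover have "p ! k \<in> V" "p ! Suc k \<in> V" using assms(1) path_in_V by simp_all
  ultimately have "{p ! k, p ! Suc k} \<in> H0"
    using edge_at_light_in_H0 path_edge[OF assms(1)] by blast
  then show ?thesis using H0_subset_H by blast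
qed

lemma heavy_pos_nonempty: "heavy_pos \<noteq> {}"
proof
  assume "heavy_pos = {}"
  then have "dist H (p ! 0) (p ! L) \<le> enat (L - 0)"
    using path_edge_in_H by (intro dist_nth_le) auto
  moreover have "enat (L + 6) < dist H (p ! 0) (p ! L)"
    using violation shortest unfolding hd_p last_p length_p by simp
  ultimately show False using less_le_trans by fastforce
qed

lemma finite_heavy_pos: "finite heavy_pos"
  unfolding heavy_pos_def by simp

lemma first_heavy: "first_heavy \<in> heavy_pos" "i \<in> heavy_pos \<Longrightarrow> first_heavy \<le> i"
  and last_heavy: "last_heavy \<in> heavy_pos" "i \<in> heavy_pos \<Longrightarrow> i \<le> last_heavy"
  using finite_heavy_pos heavy_pos_nonempty unfolding first_heavy_def last_heavy_def by auto

lemma heavy_pos_le_L: "i \<in> heavy_pos \<Longrightarrow> i \<le> L"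
  unfolding heavy_pos_def by simp

lemma dist_H_to_first_heavy: "dist H (p ! 0) (p ! first_heavy) \<le> enat first_heavy"
proof -
  have "{p ! k, p ! Suc k} \<in> H" if "k < first_heavy" for k
  proof (rule path_edge_in_H)
    show "k < L" using that first_heavy(1) heavy_pos_le_L by fastforce
    show "k \<notin> heavy_pos \<or> Suc k \<notin> heavy_pos" using that first_heavy(2) by fastforce
  qed
  then show ?thesis using dist_nth_le[of 0 first_heavy p H] by simp
qed


lemma dist_H_from_last_heavy: "dist H (p ! last_heavy) (p ! L) \<le> enat (L - last_heavy)"
proof -
  have "{p ! k, p ! Suc k} \<in> H" if "last_heavy \<le> k" "k < L" for k
  proof (rule path_edge_in_H)
    show "k < L" by (fact that(2))
    show "k \<notin> heavy_pos \<or> Suc k \<notin> heavy_pos" using that(1) last_heavy(2) by fastforce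
  qed
  then show ?thesis using dist_nth_le last_heavy(1) heavy_pos_le_L by blast
qed

text \<open>Each new edge joins two consecutive heavy nodes of p; charge it to the first one.\<close>
lemma card_new_edges: "card (H' - H) \<le> card heavy_pos"
proof -
  have "H' - H \<subseteq> (\<lambda>k. {p ! k, p ! Suc k}) ` heavy_pos"
  proof
    fix e assume e: "e \<in> H' - H"
    then obtain k where k: "e = {p ! k, p ! Suc k}" "k < L"
      unfolding H'_def walk_edges_def length_p by auto
    then have "k \<in> heavy_pos" using path_edge_in_H e by blast
    then show "e \<in> (\<lambda>k. {p ! k, p ! Suc k}) ` heavy_pos" using k by blast
  qed
  then show ?thesis using finite_heavy_pos surj_card_le by blast
qed

text \<open>As p is a shortest path, a node lies in the clusters of at most three of its nodes.\<close>
lemma card_heavy_pos_le: "Suc d * card heavy_pos \<le> 3 * card covered"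
proof -
  have finite_covered: "finite covered"
    unfolding covered_def using finite_heavy_pos card_cluster(2) heavy_pos_def by auto
  let ?P = "Sigma heavy_pos (\<lambda>i. cluster (p ! i))"
  have "card ?P = (\<Sum>i\<in>heavy_pos. card (cluster (p ! i)))"
    using finite_heavy_pos card_cluster(2) heavy_pos_def by (simp add: card_SigmaI)
  also have "\<dots> = Suc d * card heavy_pos"
    using card_cluster(1) heavy_pos_def by simp
  finally have "Suc d * card heavy_pos = card (prod.swap ` ?P)"
    by (simp add: card_image)
  also have "\<dots> \<le> card (Sigma covered (\<lambda>y. {i \<in> heavy_pos. y \<in> cluster (p ! i)}))"
    using finite_covered finite_heavy_pos by (intro card_mono) (auto simp: covered_def)
  also have "\<dots> = (\<Sum>y\<in>covered. card {i \<in> heavy_pos. y \<in> cluster (p ! i)})"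
    using finite_covered finite_heavy_pos by (simp add: card_SigmaI)
  also have "\<dots> \<le> (\<Sum>y\<in>covered. 3)"
  proof (rule sum_mono)
    fix y
    show "card {i \<in> heavy_pos. y \<in> cluster (p ! i)} \<le> 3"
    proof (rule card_le_3_if_diameter_le_2)
      fix i j assume ij: "i \<in> {i \<in> heavy_pos. y \<in> cluster (p ! i)}"
        "j \<in> {i \<in> heavy_pos. y \<in> cluster (p ! i)}" "i \<le> j"
      then have "i \<le> L" "j \<le> L" by (simp_all add: heavy_pos_le_L)
      then have "dist E (p ! i) y \<le> enat 1" "dist E y (p ! j) \<le> enat 1"
        using ij path_in_V dist_cluster_le_1 H0_subset_E by blast+
      then have "dist E (p ! i) (p ! j) \<le> enat (1 + 1)"
        by (rule dist_triangle_le)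
      moreover have "enat (j - i) \<le> dist E (p ! i) (p ! j)"
        using dist_path_ge \<open>j \<le> L\<close> ij(3) by blast
      ultimately show "j - i \<le> 2" using order_trans by fastforce
    qed (simp add: finite_heavy_pos)
  qed
  finally show ?thesis by simp
qed


text \<open>In H' the detour through the path gives d_H'(x,y) \<le> (j - i) + 2, while d_G(x,y) \<ge> (j - i) - 2.\<close>
lemma near_or_dropped:
  assumes ij: "i \<le> j" "j \<le> L" and xy: "x \<in> cluster (p ! i)" "y \<in> cluster (p ! j)"
  shows "dist H x y \<le> enat (j - i + 2) \<or> (x, y) \<in> dropped"
proof (cases "dist H x y \<le> enat (j - i + 2)")
  case False
  have V: "p ! i \<in> V" "p ! j \<in> V" using ij path_in_V by simp_all
  have "dist H' x y \<le> enat (1 + (j - i) + 1)"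
    using dist_triangle_le[OF dist_triangle_le[OF dist_cluster_le_1(2)[OF V(1) xy(1) H0_subset_H']
        dist_path_H'_le[OF ij]] dist_cluster_le_1(1)[OF V(2) xy(2) H0_subset_H']] .
  then have H'_near: "dist H' x y \<le> enat (j - i + 2)" by simp
  then obtain g where g: "dist E x y = enat g"
    using dist_antimono[OF H'_subset_E, of x y] by (cases "dist E x y") auto
  have "dist E (p ! i) (p ! j) \<le> enat (1 + g + 1)"
    using dist_triangle_le[OF dist_triangle_le[OF dist_cluster_le_1(1)[OF V(1) xy(1) H0_subset_E]
        eq_refl[OF g]] dist_cluster_le_1(2)[OF V(2) xy(2) H0_subset_E]] .
  with dist_path_ge[OF ij] have "enat (j - i) \<le> enat (1 + g + 1)" by (rule order_trans)
  then have "enat (j - i) \<le> dist E x y + 2" using g by (simp add: numeral_eq_enat)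
  then have "psi H' x y < psi H x y"
    using psi_decreases[OF H_subset_H' H'_subset_E H'_near] False by simp
  then show ?thesis unfolding dropped_def using cluster_in_V V xy by blast
qed simp

lemma dropped_sym: "(x, y) \<in> dropped \<Longrightarrow> (y, x) \<in> dropped"
  unfolding dropped_def by (simp add: psi_sym)

text \<open>Otherwise H would contain a walk from hd p to last p of length
  first_heavy + 1 + (k - first_heavy + 2) + (last_heavy - k + 2) + 1 + (L - last_heavy) = L + 6.\<close>
lemma covered_drops:
  assumes "y \<in> covered"
  shows "\<exists>c\<in>{p ! first_heavy, p ! last_heavy}. \<forall>a\<in>cluster c. (y, a) \<in> dropped"
proof (rule ccontr)
  assume "\<not> ?thesis"
  then obtain x z where x: "x \<in> cluster (p ! first_heavy)" "(y, x) \<notin> dropped"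
    and z: "z \<in> cluster (p ! last_heavy)" "(y, z) \<notin> dropped" by blast
  obtain k where k: "k \<in> heavy_pos" "y \<in> cluster (p ! k)"
    using assms unfolding covered_def by blast
  have pos: "first_heavy \<le> k" "k \<le> last_heavy" "last_heavy \<le> L"
    using first_heavy(2) last_heavy heavy_pos_le_L k(1) by auto
  have V: "p ! first_heavy \<in> V" "p ! last_heavy \<in> V"
    using path_in_V pos by simp_all
  have xy: "dist H x y \<le> enat (k - first_heavy + 2)"
    using near_or_dropped[OF pos(1) order_trans[OF pos(2,3)] x(1) k(2)] x(2) dropped_sym by blast
  have yz: "dist H y z \<le> enat (last_heavy - k + 2)"
    using near_or_dropped[OF pos(2,3) k(2) z(1)] z(2) by blast
  have "dist H (p ! 0) (p ! L) \<le> enat (first_heavy + 1 + (k - first_heavy + 2)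
      + (last_heavy - k + 2) + 1 + (L - last_heavy))"
    using dist_triangle_le[OF dist_triangle_le[OF dist_triangle_le[OF dist_triangle_le[OF
        dist_triangle_le[OF dist_H_to_first_heavy dist_cluster_le_1(1)[OF V(1) x(1) H0_subset_H]]
        xy] yz] dist_cluster_le_1(2)[OF V(2) z(1) H0_subset_H]] dist_H_from_last_heavy] .
  also have "\<dots> = enat (L + 6)" using pos by simp
  finally show False using violation shortest unfolding hd_p last_p length_p by simp
qed

lemma finite_dropped: "finite dropped"
  using finite_V unfolding dropped_def by (auto intro: finite_subset[of _ "V \<times> V"])

lemma card_covered_le: "Suc d * card covered \<le> card dropped"
proof -
  define c where "c y = (SOME c. c \<in> {p ! first_heavy, p ! last_heavy} \<and>
      (\<forall>a\<in>cluster c. (y, a) \<in> dropped))" for y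
  have c: "c y \<in> {p ! first_heavy, p ! last_heavy}" "\<forall>a\<in>cluster (c y). (y, a) \<in> dropped"
    if "y \<in> covered" for y
    using someI_ex[OF covered_drops[OF that, unfolded Bex_def]] unfolding c_def by blast+
  have heavy_c: "heavy (c y)" if "y \<in> covered" for y
    using c(1)[OF that] first_heavy(1) last_heavy(1) unfolding heavy_pos_def by auto
  have finite_covered: "finite covered"
    unfolding covered_def using finite_heavy_pos card_cluster(2) heavy_pos_def by auto
  have "Suc d * card covered = (\<Sum>y\<in>covered. card (cluster (c y)))"
    using card_cluster(1)[OF heavy_c] by simp
  also have "\<dots> = card (Sigma covered (\<lambda>y. cluster (c y)))"
    using finite_covered card_cluster(2)[OF heavy_c] by (simp add: card_SigmaI)
  also have "\<dots> \<le> card dropped"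
    using c(2) finite_dropped by (intro card_mono) auto
  finally show ?thesis .
qed

lemma Psi_H'_le: "Psi H' + card dropped \<le> Psi H"
proof -
  have "card dropped = (\<Sum>q\<in>V \<times> V. if q \<in> dropped then 1 else 0)"
    using finite_V sum.inter_restrict[of "V \<times> V" "\<lambda>_. 1::nat" dropped]
    by (simp add: Int_absorb1 dropped_def subset_iff)
  then have "Psi H' + card dropped
      = (\<Sum>(x, y)\<in>V \<times> V. psi H' x y + (if (x, y) \<in> dropped then 1 else 0))"
    unfolding Psi_def by (simp add: sum.distrib case_prod_beta)
  also have "\<dots> \<le> Psi H" unfolding Psi_def
    by (rule sum_mono) (use psi_antimono[OF H_subset_H'] in \<open>auto simp: dropped_def Suc_leI\<close>)
  finally show ?thesis .
qed

lemma potential_decreases: "(Suc d)\<^sup>2 * card H' + 3 * Psi H' \<le> (Suc d)\<^sup>2 * card H + 3 * Psi H"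
proof -
  have "card H' = card H + card (H' - H)"
  proof -
    have "finite H" "finite H'" using H_subset_E H'_subset_E finite_E finite_subset by blast+
    then show ?thesis
      using card_Un_disjoint[of H "H' - H"] H_subset_H' by (simp add: Un_absorb1)
  qed
  moreover have "(Suc d)\<^sup>2 * card (H' - H) \<le> 3 * card dropped"
  proof -
    have "(Suc d)\<^sup>2 * card (H' - H) \<le> (Suc d)\<^sup>2 * card heavy_pos"
      using card_new_edges by (rule mult_le_mono2)
    also have "\<dots> = Suc d * (Suc d * card heavy_pos)" by (simp only: power2_eq_square mult.assoc)
    also have "\<dots> \<le> Suc d * (3 * card covered)" using card_heavy_pos_le by (rule mult_le_mono2)
    also have "\<dots> = 3 * (Suc d * card covered)" by simp
    also have "\<dots> \<le> 3 * card dropped" using card_covered_le by (rule mult_le_mono2)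
    finally show ?thesis .
  qed
  ultimately show ?thesis using Psi_H'_le by (simp add: add_mult_distrib2)
qed

end

section \<open>The edge bound\<close>

context spanner_construction
begin

lemma completion_step_potential:
  assumes "H0 \<subseteq> F" "F \<subseteq> E" "completion_step V E 6 F F'"
  shows "F \<subseteq> F' \<and> F' \<subseteq> E \<and> (Suc d)\<^sup>2 * card F' + 3 * Psi F' \<le> (Suc d)\<^sup>2 * card F + 3 * Psi F"
proof -
  obtain u v p where "u \<in> V" "dist E u v + enat 6 < dist F u v" "walk E p" "hd p = u"
    "last p = v" "enat (length p - 1) = dist E u v" "F' = F \<union> walk_edges p"
    using assms(3) unfolding completion_step_def by blast
  then interpret violating_path V E S d F p
    using assms(1,2) by unfold_locales simp_all
  show ?thesis
    using H_subset_H' H'_subset_E potential_decreases unfolding H'_def \<open>F' = F \<union> walk_edges p\<close>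
    by blast
qed

lemma completion_card_bound:
  assumes "(completion_step V E 6)\<^sup>*\<^sup>* H0 F"
  shows "(Suc d)\<^sup>2 * card F \<le> (Suc d)\<^sup>2 * (card V * d) + 15 * (card V * card V)"
proof -
  have "H0 \<subseteq> F \<and> F \<subseteq> E \<and> (Suc d)\<^sup>2 * card F + 3 * Psi F \<le> (Suc d)\<^sup>2 * card H0 + 3 * Psi H0"
    using assms
  proof (induction rule: rtranclp_induct)
    case base
    then show ?case using H0_subset_E by simp
  next
    case (step F F')
    then show ?case using completion_step_potential[of F F'] by force
  qed
  then show ?thesis
    using mult_le_mono2[OF card_H0_le, of "(Suc d)\<^sup>2"] Psi_le[of H0] by linarith
qed

end

lemma real_bound_from_potential:
  fixes n d h :: nat
  assumes h: "(Suc d)\<^sup>2 * h \<le> (Suc d)\<^sup>2 * (n * d) + 15 * (n * n)"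
    and d: "d = nat \<lfloor>real n powr (1/3)\<rfloor>"
  shows "real h \<le> 16 * real n powr (4/3)"
proof -
  define a where "a = real n powr (1/3)"
  define s where "s = real d + 1"
  have "0 \<le> a" unfolding a_def by simp
  then have a: "0 \<le> a" "real d \<le> a" "a \<le> s"
    using d unfolding a_def s_def by simp_all
  have pow: "real n powr (k / 3) = a ^ k" if "0 < k" for k :: nat
    using that unfolding a_def by (cases "n = 0") (simp_all add: powr_powr flip: powr_realpow)
  have n: "real n = a ^ 3" using pow[of 3] by simp
  have "s\<^sup>2 * real h \<le> s\<^sup>2 * (real n * real d) + 15 * (real n * real n)"
    using of_nat_mono[OF h] unfolding s_def by (simp add: add.commute)
  also have "\<dots> \<le> s\<^sup>2 * a ^ 4 + 15 * (a ^ 4 * s\<^sup>2)"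
  proof (intro add_mono mult_left_mono)
    show "real n * real d \<le> a ^ 4" using n a by (simp add: mult_left_mono power3_eq_cube power4_eq_xxxx)
    have "real n * real n = a ^ 4 * a\<^sup>2" using n by (simp flip: power_add)
    also have "\<dots> \<le> a ^ 4 * s\<^sup>2" using a by (intro mult_left_mono power_mono) simp_all
    finally show "real n * real n \<le> a ^ 4 * s\<^sup>2" .
  qed simp_all
  finally have "s\<^sup>2 * real h \<le> s\<^sup>2 * (16 * a ^ 4)" by (simp add: algebra_simps)
  then have "real h \<le> 16 * a ^ 4" using a s_def by (simp add: mult_le_cancel_left)
  then show ?thesis using pow[of 4] by simp
qed

theorem theorem1:
  shows "\<exists>C::real. \<forall>(V::nat set) E (S::nat \<Rightarrow> nat set set) H.
     simple_graph V E \<and>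
     (\<forall>x\<in>V. S x \<subseteq> {e \<in> E. x \<in> e} \<and>
        card (S x) = min (degree E x) (nat \<lfloor>real (card V) powr (1/3)\<rfloor>)) \<and>
     (completion_step V E 6)\<^sup>*\<^sup>* (\<Union>x\<in>V. S x) H \<and>
     additive_spanner V E 6 H
     \<longrightarrow> real (card H) \<le> C * real (card V) powr (4/3)"
proof (intro exI[of _ 16] allI impI, elim conjE)
  fix V :: "nat set" and E S H
  define d where "d = nat \<lfloor>real (card V) powr (1/3)\<rfloor>"
  assume "simple_graph V E"
    and "\<forall>x\<in>V. S x \<subseteq> {e \<in> E. x \<in> e} \<and> card (S x) = min (degree E x) d"
    and run: "(completion_step V E 6)\<^sup>*\<^sup>* (\<Union>x\<in>V. S x) H"
  then interpret spanner_construction V E S d by unfold_locales auto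
  have "(Suc d)\<^sup>2 * card H \<le> (Suc d)\<^sup>2 * (card V * d) + 15 * (card V * card V)"
    using completion_card_bound run unfolding H0_def by blast
  then show "real (card H) \<le> 16 * real (card V) powr (4/3)"
    using d_def by (rule real_bound_from_potential)
qed

end
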